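(* Let $G\subset\mathbb R^r$ be a lattice of rank $r$ acting on $C(\mathbb R^r)$ by $f^g(x)=f(x+g)$. (a) For every $n\in\mathbb Z_+$ and every $G$-periodic monomial $Q_m$ of degree $m\le n$, $D^{n+1}Q_m=0$. (b) Let $n\ge1$ and $Q_n=x_{i_1}\cdots x_{i_n}=x_1^{j_1}\cdots x_r^{j_r}$ with $1\le i_1,\dots,i_n\le r$, $j_1+\dots+j_r=n$, each $x_k$ appearing exactly $j_k$ times. For $g_1,\dots,g_n\in G$ write $g_i=\sum_{k=1}^rg_{i,k}\mathbf e_k$ in the standard basis $\mathbf e_1,\dots,\mathbf e_r$ of $\mathbb R^r$. Then $[D^nQ_n](g_1,\dots,g_n)$ is the constant function $$\sum_{(s_1,\dots,s_n)\in\mathbf S(n)}g_{1,i_{s_1}}g_{2,i_{s_2}}\cdots g_{n,i_{s_n}}=j_1!\cdots j_r!\sum_{\boldsymbol\kappa}g_{1,k_1}g_{2,k_2}\cdots g_{n,k_n},$$ where $\mathbf S(n)$ is the set of permutations of $\{1,\dots,n\}$ and $\boldsymbol\kappa=(k_1,\dots,k_n)$ runs over all sequences of length $n$ containing each index $k\in\{1,\dots,r\}$ exactly $j_k$ times.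
   Context: $C(\mathbb R^r)$ is the algebra of continuous (real or complex) functions on $\mathbb R^r$, and $x_1,\dots,x_r$ are the standard coordinates. A function is $G$-periodic if $f(x+g)=f(x)$ for all $g\in G$. A $G$-periodic monomial of degree $m$ is a function $f(x)\,x_{i_1}\cdots x_{i_m}$ with $f\ne0$ continuous and $G$-periodic. For a group $G$ acting on a space $A$ by $f\mapsto f^g$: $\mathcal C^0(G,A)=A$; for $n\ge1$, $\mathcal C^n(G,A)$ is the space of functions $G^n\to A$ vanishing whenever some argument is $0\in G$; $(d_nc)(g_1,\dots,g_n)=[c(g_1,\dots,g_{n-1})]^{g_n}-c(g_1,\dots,g_{n-1})$; $D^0=\mathrm{id}$, $D^n=d_nD^{n-1}$. *)

theory Defs
  imports "HOL-Analysis.Analysis" "HOL-Combinatorics.Permutations"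
begin

definition full_rank_lattice :: "(real ^ 'n) set \<Rightarrow> bool" where
  "full_rank_lattice G \<longleftrightarrow>
     (\<exists>b :: 'n \<Rightarrow> real ^ 'n. inj b \<and> independent (range b) \<and>
        G = {(\<Sum>k\<in>UNIV. of_int (c k) *\<^sub>R b k) | c :: 'n \<Rightarrow> int. True})"

definition G_periodic :: "(real ^ 'n) set \<Rightarrow> (real ^ 'n \<Rightarrow> 'a) \<Rightarrow> bool" where
  "G_periodic G f \<longleftrightarrow> (\<forall>g\<in>G. \<forall>x. f (x + g) = f x)"

text \<open>The iterated coboundary D^n = d_n \<circ> ... \<circ> d_1 applied to an element Q of the
  space of functions, for the action f^g(x) = f(x+g).  The cochain D^n Q is evaluated at
  (g 1, ..., g n); it only depends on these values.\<close>
fun Dcob :: "nat \<Rightarrow> (real ^ 'n \<Rightarrow> 'a::ab_group_add) \<Rightarrow> (nat \<Rightarrow> real ^ 'n) \<Rightarrow> (real ^ 'n \<Rightarrow> 'a)" where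
  "Dcob 0 Q g = Q"
| "Dcob (Suc n) Q g = (\<lambda>x. Dcob n Q g (x + g (Suc n)) - Dcob n Q g x)"

end

theory Submission
  imports Defs
begin

text \<open>The difference operators Q \<mapsto> Q(\<cdot> + h) - Q commute, so D^n Q is an n-fold iterated
  difference, and along lattice vectors they commute with multiplication by a G-periodic function.
  For a product of additive functions \<phi> a, a \<in> A, expanding \<Prod>(\<phi> a x + \<phi> a h) shows that
  its difference is a combination of products over proper subsets of A.  Hence more than |A|
  differences annihilate it, and with exactly n = |A| differences only the subsets A - {a} contribute
  at each step, leaving a sum over the bijections {1..n} \<rightarrow> A.  Finally, grouping the permutations
  \<sigma> by the pattern i \<circ> \<sigma>, every sequence with the same letter counts j_k as i arises from
  exactly j_1! ... j_r! of them.\<close>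

definition forward_diff :: "real ^ 'n \<Rightarrow> (real ^ 'n \<Rightarrow> 'a::ab_group_add) \<Rightarrow> real ^ 'n \<Rightarrow> 'a" where
  "forward_diff h Q = (\<lambda>x. Q (x + h) - Q x)"

lemma Dcob_forward_diff: "Dcob n (forward_diff h Q) g = forward_diff h (Dcob n Q g)"
  by (induction n) (simp_all add: forward_diff_def algebra_simps)

text \<open>The differences commute, so the last one may be applied first.\<close>

lemma Dcob_Suc_forward_diff: "Dcob (Suc n) Q g = Dcob n (forward_diff (g (Suc n)) Q) g"
  unfolding Dcob_forward_diff by (simp add: forward_diff_def)

lemma Dcob_sum: "Dcob n (\<lambda>x. \<Sum>a\<in>A. Q a x) g = (\<lambda>x. \<Sum>a\<in>A. Dcob n (Q a) g x)"
  by (induction n) (simp_all add: sum_subtractf)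

lemma Dcob_mult_periodic:
  fixes f :: "real ^ 'n \<Rightarrow> 'a::comm_ring"
  assumes "\<forall>l\<in>{1..n}. \<forall>x. f (x + g l) = f x"
  shows "Dcob n (\<lambda>x. f x * Q x) g = (\<lambda>x. f x * Dcob n Q g x)"
  using assms by (induction n) (simp_all add: right_diff_distrib)

lemma forward_diff_prod_additive:
  fixes \<phi> :: "'b \<Rightarrow> real ^ 'n \<Rightarrow> 'a::comm_ring_1"
  assumes "finite A" and "\<And>a x y. \<phi> a (x + y) = \<phi> a x + \<phi> a y"
  shows "forward_diff h (\<lambda>x. \<Prod>a\<in>A. \<phi> a x)
           = (\<lambda>x. \<Sum>C\<in>Pow A - {A}. (\<Prod>a\<in>A - C. \<phi> a h) * (\<Prod>a\<in>C. \<phi> a x))"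
proof
  fix x
  have "(\<Prod>a\<in>A. \<phi> a (x + h)) = (\<Sum>C\<in>Pow A. (\<Prod>a\<in>C. \<phi> a x) * (\<Prod>a\<in>A - C. \<phi> a h))"
    using assms by (simp add: prod_add)
  also have "\<dots> = (\<Prod>a\<in>A. \<phi> a x) + (\<Sum>C\<in>Pow A - {A}. (\<Prod>a\<in>C. \<phi> a x) * (\<Prod>a\<in>A - C. \<phi> a h))"
    using assms(1) by (simp add: sum.remove[of _ A])
  finally show "forward_diff h (\<lambda>x. \<Prod>a\<in>A. \<phi> a x) x
      = (\<Sum>C\<in>Pow A - {A}. (\<Prod>a\<in>A - C. \<phi> a h) * (\<Prod>a\<in>C. \<phi> a x))"
    by (simp add: forward_diff_def mult.commute)
qed

lemma Dcob_Suc_prod_additive: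
  fixes \<phi> :: "'b \<Rightarrow> real ^ 'n \<Rightarrow> 'a::comm_ring_1"
  assumes "finite A" and "\<And>a x y. \<phi> a (x + y) = \<phi> a x + \<phi> a y"
  shows "Dcob (Suc n) (\<lambda>x. \<Prod>a\<in>A. \<phi> a x) g
           = (\<lambda>x. \<Sum>C\<in>Pow A - {A}. (\<Prod>a\<in>A - C. \<phi> a (g (Suc n))) * Dcob n (\<lambda>x. \<Prod>a\<in>C. \<phi> a x) g x)"
  unfolding Dcob_Suc_forward_diff forward_diff_prod_additive[OF assms] Dcob_sum
  by (simp add: Dcob_mult_periodic)

lemma Dcob_prod_additive_eq_0:
  fixes \<phi> :: "'b \<Rightarrow> real ^ 'n \<Rightarrow> 'a::comm_ring_1"
  assumes "finite A" and "card A < n" and "\<And>a x y. \<phi> a (x + y) = \<phi> a x + \<phi> a y"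
  shows "Dcob n (\<lambda>x. \<Prod>a\<in>A. \<phi> a x) g = (\<lambda>x. 0)"
  using assms(1,2)
proof (induction n arbitrary: A)
  case 0
  then show ?case by simp
next
  case (Suc n)
  have "Dcob n (\<lambda>x. \<Prod>a\<in>C. \<phi> a x) g = (\<lambda>x. 0)" if "C \<in> Pow A - {A}" for C
  proof (rule Suc.IH)
    show "finite C" using that Suc.prems(1) finite_subset by blast
    have "card C < card A" using that Suc.prems(1) by (auto intro: psubset_card_mono)
    then show "card C < n" using Suc.prems(2) by simp
  qed
  then show ?case
    unfolding Dcob_Suc_prod_additive[OF Suc.prems(1) assms(3)] by simp
qed

text \<open>Extending by the identity outside B makes the case B = A coincide with \<open>permutes\<close>.\<close>

definition constrained_bijections :: "'a set \<Rightarrow> 'a set \<Rightarrow> ('a \<Rightarrow> 'a \<Rightarrow> bool) \<Rightarrow> ('a \<Rightarrow> 'a) set" where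
  "constrained_bijections B A P =
     {\<sigma>. bij_betw \<sigma> B A \<and> (\<forall>x. x \<notin> B \<longrightarrow> \<sigma> x = x) \<and> (\<forall>b\<in>B. P b (\<sigma> b))}"

lemma constrained_bijections_empty: "constrained_bijections {} {} P = {id}"
  by (auto simp: constrained_bijections_def fun_eq_iff)

lemma constrained_bijections_permutes:
  "constrained_bijections S S (\<lambda>_ _. True) = {\<sigma>. \<sigma> permutes S}"
  unfolding constrained_bijections_def
  using permutes_imp_bij permutes_not_in bij_imp_permutes by fastforce

lemma finite_constrained_bijections:
  assumes "finite B" and "finite A"
  shows "finite (constrained_bijections B A P)"
proof (rule finite_imageD)
  show "inj_on (\<lambda>\<sigma>. restrict \<sigma> B) (constrained_bijections B A P)"
  proof (rule inj_onI, rule ext)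
    fix \<sigma> \<tau> x
    assume "\<sigma> \<in> constrained_bijections B A P" "\<tau> \<in> constrained_bijections B A P"
      and "restrict \<sigma> B = restrict \<tau> B"
    then show "\<sigma> x = \<tau> x"
      unfolding constrained_bijections_def by (cases "x \<in> B") (auto dest: fun_cong[where x = x])
  qed
  have "(\<lambda>\<sigma>. restrict \<sigma> B) ` constrained_bijections B A P \<subseteq> B \<rightarrow>\<^sub>E A"
    by (auto simp: constrained_bijections_def bij_betw_def)
  then show "finite ((\<lambda>\<sigma>. restrict \<sigma> B) ` constrained_bijections B A P)"
    using assms by (rule finite_subset[OF _ finite_PiE])
qed

lemma bij_betw_fun_upd_insert:
  assumes "b \<notin> B" and "a \<notin> A"
  shows "bij_betw (f(b := a)) (insert b B) (insert a A) \<longleftrightarrow> bij_betw f B A"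
proof -
  have "bij_betw (f(b := a)) B A \<longleftrightarrow> bij_betw f B A"
    using assms(1) by (intro bij_betw_cong) auto
  then show ?thesis
    using notIn_Un_bij_betw3[of b B "f(b := a)" A] assms by simp
qed

lemma constrained_bijections_insert_iff:
  assumes "b \<notin> B" and "a \<in> A"
  shows "\<sigma>(b := a) \<in> constrained_bijections (insert b B) A P
           \<longleftrightarrow> P b a \<and> \<sigma>(b := b) \<in> constrained_bijections B (A - {a}) P"
proof -
  have "bij_betw (\<sigma>(b := a)) (insert b B) A \<longleftrightarrow> bij_betw (\<sigma>(b := b)) B (A - {a})"
    using bij_betw_fun_upd_insert[of b B a "A - {a}" "\<sigma>(b := b)"] assms by (simp add: insert_absorb)
  then show ?thesis
    using assms(1) by (auto simp: constrained_bijections_def)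
qed

lemma sum_constrained_bijections_insert:
  assumes "finite B" and "finite A" and "b \<notin> B"
  shows "(\<Sum>\<tau>\<in>constrained_bijections (insert b B) A P. F \<tau>)
           = (\<Sum>a\<in>{a\<in>A. P b a}. \<Sum>\<sigma>\<in>constrained_bijections B (A - {a}) P. F (\<sigma>(b := a)))"
proof -
  let ?S = "Sigma {a\<in>A. P b a} (\<lambda>a. constrained_bijections B (A - {a}) P)"
  have fixes_b: "\<sigma> b = b" if "\<sigma> \<in> constrained_bijections B A' P" for \<sigma> A'
    using that assms(3) by (simp add: constrained_bijections_def)
  have "(\<Sum>\<tau>\<in>constrained_bijections (insert b B) A P. F \<tau>) = (\<Sum>(a, \<sigma>)\<in>?S. F (\<sigma>(b := a)))"
  proof (rule sum.reindex_bij_witness[of _ "\<lambda>(a, \<sigma>). \<sigma>(b := a)" "\<lambda>\<tau>. (\<tau> b, \<tau>(b := b))"])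
    fix \<tau> assume \<tau>: "\<tau> \<in> constrained_bijections (insert b B) A P"
    then have "\<tau> b \<in> A"
      by (auto simp: constrained_bijections_def bij_betw_def)
    with \<tau> show "(\<tau> b, \<tau>(b := b)) \<in> ?S"
      using constrained_bijections_insert_iff[OF assms(3), of "\<tau> b" A \<tau> P] by simp
  next
    fix p assume "p \<in> ?S"
    then obtain a \<sigma> where p: "p = (a, \<sigma>)" and "a \<in> A"
      and \<sigma>: "\<sigma> \<in> constrained_bijections B (A - {a}) P" "P b a"
      by auto
    moreover have "\<sigma>(b := b) = \<sigma>"
      using fixes_b[OF \<sigma>(1)] by (simp add: fun_upd_idem)
    ultimately show "(case p of (a, \<sigma>) \<Rightarrow> \<sigma>(b := a)) \<in> constrained_bijections (insert b B) A P"
      and "(\<lambda>\<tau>. (\<tau> b, \<tau>(b := b))) (case p of (a, \<sigma>) \<Rightarrow> \<sigma>(b := a)) = p"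
      using constrained_bijections_insert_iff[OF assms(3), of a A \<sigma> P] by simp_all
  qed auto
  also have "\<dots> = (\<Sum>a\<in>{a\<in>A. P b a}. \<Sum>\<sigma>\<in>constrained_bijections B (A - {a}) P. F (\<sigma>(b := a)))"
    using assms by (subst sum.Sigma) (auto intro: finite_constrained_bijections)
  finally show ?thesis .
qed

lemma sum_proper_subsets_eq_sum_Diff_singleton:
  assumes "finite A" and "\<And>C. C \<subset> A \<Longrightarrow> card C + 1 < card A \<Longrightarrow> F C = 0"
  shows "(\<Sum>C\<in>Pow A - {A}. F C) = (\<Sum>a\<in>A. F (A - {a}))"
proof -
  have "(\<Sum>C\<in>Pow A - {A}. F C) = (\<Sum>C\<in>(\<lambda>a. A - {a}) ` A. F C)"
  proof (rule sum.mono_neutral_right)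
    show "(\<lambda>a. A - {a}) ` A \<subseteq> Pow A - {A}" by auto
    show "\<forall>C\<in>Pow A - {A} - (\<lambda>a. A - {a}) ` A. F C = 0"
    proof
      fix C assume C: "C \<in> Pow A - {A} - (\<lambda>a. A - {a}) ` A"
      then obtain a where "a \<in> A" "C \<subseteq> A - {a}" by blast
      with C have "C \<subset> A - {a}" by blast
      then have "card C < card A - 1"
        using assms(1) \<open>a \<in> A\<close> by (metis card_Diff_singleton finite_Diff psubset_card_mono)
      moreover have "C \<subset> A" using C by blast
      ultimately show "F C = 0" using assms(2) by simp
    qed
  qed (use assms(1) in simp)
  also have "\<dots> = (\<Sum>a\<in>A. F (A - {a}))"
    by (subst sum.reindex) (auto simp: inj_on_def)
  finally show ?thesis .
qed

lemma Dcob_prod_additive_card_eq: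
  fixes \<phi> :: "nat \<Rightarrow> real ^ 'n \<Rightarrow> 'a::comm_ring_1"
  assumes "finite A" and "card A = n" and "\<And>a x y. \<phi> a (x + y) = \<phi> a x + \<phi> a y"
  shows "Dcob n (\<lambda>x. \<Prod>a\<in>A. \<phi> a x) g
           = (\<lambda>x. \<Sum>\<sigma>\<in>constrained_bijections {1..n} A (\<lambda>_ _. True). \<Prod>l=1..n. \<phi> (\<sigma> l) (g l))"
  using assms(1,2)
proof (induction n arbitrary: A)
  case 0
  then show ?case by (simp add: constrained_bijections_empty)
next
  case (Suc n)
  let ?c = "\<lambda>a. \<phi> a (g (Suc n))"
  let ?D = "\<lambda>C. Dcob n (\<lambda>x. \<Prod>a\<in>C. \<phi> a x) g"
  have "Dcob (Suc n) (\<lambda>x. \<Prod>a\<in>A. \<phi> a x) g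
          = (\<lambda>x. \<Sum>C\<in>Pow A - {A}. (\<Prod>a\<in>A - C. \<phi> a (g (Suc n))) * ?D C x)"
    by (rule Dcob_Suc_prod_additive[OF Suc.prems(1) assms(3)])
  also have "\<dots> = (\<lambda>x. \<Sum>a\<in>A. ?c a * ?D (A - {a}) x)"
  proof
    fix x
    have "?D C = (\<lambda>x. 0)" if "C \<subset> A" "card C + 1 < card A" for C
    proof (rule Dcob_prod_additive_eq_0[where \<phi> = \<phi>, OF _ _ assms(3)])
      show "finite C" using that Suc.prems(1) finite_subset by blast
      show "card C < n" using that Suc.prems(2) by simp
    qed
    then show "(\<Sum>C\<in>Pow A - {A}. (\<Prod>a\<in>A - C. \<phi> a (g (Suc n))) * ?D C x) = (\<Sum>a\<in>A. ?c a * ?D (A - {a}) x)"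
      using Suc.prems(1) by (subst sum_proper_subsets_eq_sum_Diff_singleton) (auto simp: Diff_Diff_Int Int_absorb2)
  qed
  also have "\<dots> = (\<lambda>x. \<Sum>a\<in>A. \<Sum>\<sigma>\<in>constrained_bijections {1..n} (A - {a}) (\<lambda>_ _. True).
                        ?c a * (\<Prod>l=1..n. \<phi> (\<sigma> l) (g l)))"
    using Suc by (simp add: sum_distrib_left)
  also have "\<dots> = (\<lambda>x. \<Sum>\<sigma>\<in>constrained_bijections {1..Suc n} A (\<lambda>_ _. True). \<Prod>l=1..Suc n. \<phi> (\<sigma> l) (g l))"
  proof -
    have "(\<Prod>l=1..Suc n. \<phi> ((\<sigma>(Suc n := a)) l) (g l)) = ?c a * (\<Prod>l=1..n. \<phi> (\<sigma> l) (g l))" for \<sigma> a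
    proof -
      have "(\<Prod>l=1..n. \<phi> ((\<sigma>(Suc n := a)) l) (g l)) = (\<Prod>l=1..n. \<phi> (\<sigma> l) (g l))"
        by (rule prod.cong) auto
      then show ?thesis by (simp add: prod.nat_ivl_Suc')
    qed
    then show ?thesis
      using Suc.prems(1) by (simp add: atLeastAtMostSuc_conv sum_constrained_bijections_insert)
  qed
  finally show ?case .
qed

lemma card_fibre_insert:
  assumes "finite B" and "b \<notin> B"
  shows "card {x\<in>insert b B. \<kappa> x = k} = card {x\<in>B. \<kappa> x = k} + of_bool (\<kappa> b = k)"
proof (cases "\<kappa> b = k")
  case True
  then have "{x\<in>insert b B. \<kappa> x = k} = insert b {x\<in>B. \<kappa> x = k}" by auto
  then show ?thesis using True assms by simp
next
  case False
  then have "{x\<in>insert b B. \<kappa> x = k} = {x\<in>B. \<kappa> x = k}" by auto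
  then show ?thesis using False by simp
qed

lemma card_fibre_remove:
  assumes "finite A" and "a \<in> A"
  shows "card {x\<in>A - {a}. i x = k} = card {x\<in>A. i x = k} - of_bool (i a = k)"
proof -
  have "{x\<in>A - {a}. i x = k} = {x\<in>A. i x = k} - {a}" by auto
  then show ?thesis using assms by (simp add: card_Diff_singleton_if)
qed

lemma prod_fact_decrement:
  fixes c :: "'k \<Rightarrow> nat"
  assumes "finite K" and "k\<^sub>0 \<in> K" and "0 < c k\<^sub>0"
  shows "(\<Prod>k\<in>K. fact (c k)) = c k\<^sub>0 * (\<Prod>k\<in>K. fact (c k - of_bool (k = k\<^sub>0)) :: nat)"
proof -
  have "fact (c k\<^sub>0) = c k\<^sub>0 * fact (c k\<^sub>0 - 1)"
    using assms(3) by (simp add: fact_reduce)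
  moreover have "(\<Prod>k\<in>K - {k\<^sub>0}. fact (c k)) = (\<Prod>k\<in>K - {k\<^sub>0}. fact (c k - of_bool (k = k\<^sub>0)) :: nat)"
    by (rule prod.cong) auto
  ultimately show ?thesis
    using assms(1,2) by (simp add: prod.remove)
qed

lemma card_constrained_bijections_fibres:
  fixes i \<kappa> :: "'b \<Rightarrow> 'k::finite"
  assumes "finite B" and "finite A" and "\<And>k. card {b\<in>B. \<kappa> b = k} = card {a\<in>A. i a = k}"
  shows "card (constrained_bijections B A (\<lambda>b a. i a = \<kappa> b)) = (\<Prod>k\<in>UNIV. fact (card {a\<in>A. i a = k}))"
  using assms
proof (induction B arbitrary: A rule: finite_induct)
  case empty
  have "A = {}"
  proof (rule ccontr)
    assume "A \<noteq> {}"
    then obtain a where "a \<in> A" by blast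
    then have "card {x\<in>A. i x = i a} \<noteq> 0" using empty.prems(1) by auto
    then show False using empty.prems(2)[of "i a"] by simp
  qed
  then show ?case by (simp add: constrained_bijections_empty)
next
  case (insert b B)
  let ?c = "\<lambda>k. card {a\<in>A. i a = k}"
  let ?F = "{a\<in>A. i a = \<kappa> b}"
  have card_F: "card ?F = Suc (card {x\<in>B. \<kappa> x = \<kappa> b})"
    using insert.prems(2)[of "\<kappa> b"] card_fibre_insert[OF insert.hyps, of \<kappa> "\<kappa> b"] by simp
  have "card (constrained_bijections (insert b B) A (\<lambda>b a. i a = \<kappa> b))
          = (\<Sum>a\<in>?F. card (constrained_bijections B (A - {a}) (\<lambda>b a. i a = \<kappa> b)))"
    using sum_constrained_bijections_insert[OF insert.hyps(1) insert.prems(1) insert.hyps(2),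
        where P = "\<lambda>b a. i a = \<kappa> b" and F = "\<lambda>_. 1 :: nat"]
    by simp
  also have "\<dots> = (\<Sum>a\<in>?F. \<Prod>k\<in>UNIV. fact (?c k - of_bool (k = \<kappa> b)))"
  proof (rule sum.cong)
    fix a assume a: "a \<in> ?F"
    have fibres_A_minus_a: "card {x\<in>A - {a}. i x = k} = ?c k - of_bool (k = \<kappa> b)" for k
      using card_fibre_remove[OF insert.prems(1), of a i k] a by auto
    have "card {x\<in>B. \<kappa> x = k} = card {x\<in>A - {a}. i x = k}" for k
      using insert.prems(2)[of k] card_fibre_insert[OF insert.hyps, of \<kappa> k] fibres_A_minus_a[of k]
      by auto
    then have "card (constrained_bijections B (A - {a}) (\<lambda>b a. i a = \<kappa> b))
                 = (\<Prod>k\<in>UNIV. fact (card {x\<in>A - {a}. i x = k}))"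
      using insert.IH[of "A - {a}"] insert.prems(1) by blast
    then show "card (constrained_bijections B (A - {a}) (\<lambda>b a. i a = \<kappa> b))
                 = (\<Prod>k\<in>UNIV. fact (?c k - of_bool (k = \<kappa> b)))"
      by (simp only: fibres_A_minus_a)
  qed simp
  also have "\<dots> = (\<Prod>k\<in>UNIV. fact (?c k))"
    using prod_fact_decrement[of UNIV "\<kappa> b" ?c] card_F by simp
  finally show ?case .
qed

lemma card_fibre_permutes:
  assumes "\<sigma> permutes S"
  shows "card {l\<in>S. i (\<sigma> l) = k} = card {l\<in>S. i l = k}"
proof -
  have "\<sigma> ` {l\<in>S. i (\<sigma> l) = k} = {l\<in>S. i l = k}"
    using permutes_image[OF assms] by auto
  then show ?thesis
    using card_image[OF inj_on_subset[OF permutes_inj_on[OF assms]]] by (metis subset_UNIV)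
qed

lemma sum_permutes_collect_patterns:
  fixes i :: "'b \<Rightarrow> 'k::finite" and w :: "'b \<Rightarrow> 'k \<Rightarrow> 'a::comm_semiring_1"
  assumes "finite S"
  shows "(\<Sum>\<sigma>\<in>{\<sigma>. \<sigma> permutes S}. \<Prod>l\<in>S. w l (i (\<sigma> l)))
           = of_nat (\<Prod>k\<in>UNIV. fact (card {l\<in>S. i l = k}))
             * (\<Sum>\<kappa>\<in>{\<kappa> \<in> S \<rightarrow>\<^sub>E UNIV. \<forall>k. card {l\<in>S. \<kappa> l = k} = card {l\<in>S. i l = k}}.
                  \<Prod>l\<in>S. w l (\<kappa> l))"
proof -
  let ?P = "{\<sigma>. \<sigma> permutes S}"
  let ?T = "{\<kappa> \<in> S \<rightarrow>\<^sub>E UNIV. \<forall>k. card {l\<in>S. \<kappa> l = k} = card {l\<in>S. i l = k}}"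
  let ?pattern = "\<lambda>\<sigma>. restrict (i \<circ> \<sigma>) S"
  let ?N = "\<Prod>k\<in>UNIV. fact (card {l\<in>S. i l = k})"
  have finite_T: "finite ?T"
    using assms by (auto intro: finite_subset[OF _ finite_PiE])
  have pattern_in_T: "?pattern ` ?P \<subseteq> ?T"
  proof (rule image_subsetI)
    fix \<sigma> assume "\<sigma> \<in> ?P"
    moreover have "{l\<in>S. ?pattern \<sigma> l = k} = {l\<in>S. i (\<sigma> l) = k}" for k by auto
    ultimately show "?pattern \<sigma> \<in> ?T" by (simp add: card_fibre_permutes)
  qed
  have fibre: "{\<sigma>\<in>?P. ?pattern \<sigma> = \<kappa>} = constrained_bijections S S (\<lambda>b a. i a = \<kappa> b)"
    if "\<kappa> \<in> ?T" for \<kappa>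
    using that
    by (auto simp: constrained_bijections_def fun_eq_iff PiE_def extensional_def restrict_def
        permutes_imp_bij permutes_not_in intro: bij_imp_permutes)
  have "(\<Sum>\<sigma>\<in>?P. \<Prod>l\<in>S. w l (i (\<sigma> l))) = (\<Sum>\<kappa>\<in>?T. \<Sum>\<sigma>\<in>{\<sigma>\<in>?P. ?pattern \<sigma> = \<kappa>}. \<Prod>l\<in>S. w l (i (\<sigma> l)))"
    by (rule sum.group[OF finite_permutations[OF assms] finite_T pattern_in_T, symmetric])
  also have "\<dots> = (\<Sum>\<kappa>\<in>?T. of_nat ?N * (\<Prod>l\<in>S. w l (\<kappa> l)))"
  proof (rule sum.cong[OF refl])
    fix \<kappa> assume \<kappa>: "\<kappa> \<in> ?T"
    have "(\<Sum>\<sigma>\<in>{\<sigma>\<in>?P. ?pattern \<sigma> = \<kappa>}. \<Prod>l\<in>S. w l (i (\<sigma> l)))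
            = (\<Sum>\<sigma>\<in>{\<sigma>\<in>?P. ?pattern \<sigma> = \<kappa>}. \<Prod>l\<in>S. w l (\<kappa> l))"
      by (intro sum.cong prod.cong) auto
    also have "\<dots> = of_nat (card {\<sigma>\<in>?P. ?pattern \<sigma> = \<kappa>}) * (\<Prod>l\<in>S. w l (\<kappa> l))"
      by simp
    also have "card {\<sigma>\<in>?P. ?pattern \<sigma> = \<kappa>} = ?N"
      unfolding fibre[OF \<kappa>] using assms \<kappa> by (intro card_constrained_bijections_fibres) auto
    finally show "(\<Sum>\<sigma>\<in>{\<sigma>\<in>?P. ?pattern \<sigma> = \<kappa>}. \<Prod>l\<in>S. w l (i (\<sigma> l))) = of_nat ?N * (\<Prod>l\<in>S. w l (\<kappa> l))" .
  qed
  finally show ?thesis by (simp add: sum_distrib_left)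
qed

theorem lemma3p1:
  fixes G :: "(real ^ 'n) set"
  assumes "full_rank_lattice G"
  shows
   "(\<forall>(f :: real ^ 'n \<Rightarrow> 'a::real_normed_field) (m::nat) (i :: nat \<Rightarrow> 'n) (n::nat) (g :: nat \<Rightarrow> real ^ 'n).
        continuous_on UNIV f \<and> G_periodic G f \<and> f \<noteq> (\<lambda>x. 0) \<and> m \<le> n
        \<and> (\<forall>l\<in>{1..n+1}. g l \<in> G) \<longrightarrow>
        Dcob (n+1) (\<lambda>x. f x * (\<Prod>l=1..m. of_real (x $ i l))) g = (\<lambda>x. 0))
    \<and>
    (\<forall>(n::nat) (i :: nat \<Rightarrow> 'n) (g :: nat \<Rightarrow> real ^ 'n).
        n \<ge> 1 \<and> (\<forall>l\<in>{1..n}. g l \<in> G) \<longrightarrow>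
        Dcob n (\<lambda>x. (\<Prod>l=1..n. of_real (x $ i l) :: 'a)) g
          = (\<lambda>x. \<Sum>\<sigma>\<in>{\<sigma>. \<sigma> permutes {1..n}}. \<Prod>l=1..n. of_real (g l $ i (\<sigma> l)))
        \<and> (\<Sum>\<sigma>\<in>{\<sigma>. \<sigma> permutes {1..n}}. \<Prod>l=1..n. of_real (g l $ i (\<sigma> l)) :: 'a)
          = of_nat (\<Prod>k\<in>UNIV. fact (card {l\<in>{1..n}. i l = k}))
            * (\<Sum>\<kappa>\<in>{\<kappa> \<in> {1..n} \<rightarrow>\<^sub>E (UNIV :: 'n set).
                     \<forall>k. card {l\<in>{1..n}. \<kappa> l = k} = card {l\<in>{1..n}. i l = k}}.
                 \<Prod>l=1..n. of_real (g l $ \<kappa> l)))"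
proof (intro conjI allI impI)
  fix f :: "real ^ 'n \<Rightarrow> 'a" and m n :: nat and i :: "nat \<Rightarrow> 'n" and g :: "nat \<Rightarrow> real ^ 'n"
  assume H: "continuous_on UNIV f \<and> G_periodic G f \<and> f \<noteq> (\<lambda>x. 0) \<and> m \<le> n \<and> (\<forall>l\<in>{1..n+1}. g l \<in> G)"
  then have periodic: "\<forall>l\<in>{1..n+1}. \<forall>x. f (x + g l) = f x"
    by (auto simp: G_periodic_def)
  have vanishes: "Dcob (n+1) (\<lambda>x. \<Prod>l=1..m. of_real (x $ i l) :: 'a) g = (\<lambda>x. 0)"
    using H by (intro Dcob_prod_additive_eq_0) auto
  show "Dcob (n+1) (\<lambda>x. f x * (\<Prod>l=1..m. of_real (x $ i l))) g = (\<lambda>x. 0)"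
    unfolding Dcob_mult_periodic[OF periodic] vanishes by simp
next
  fix n :: nat and i :: "nat \<Rightarrow> 'n" and g :: "nat \<Rightarrow> real ^ 'n"
  show "Dcob n (\<lambda>x. (\<Prod>l=1..n. of_real (x $ i l) :: 'a)) g
          = (\<lambda>x. \<Sum>\<sigma>\<in>{\<sigma>. \<sigma> permutes {1..n}}. \<Prod>l=1..n. of_real (g l $ i (\<sigma> l)))"
    by (simp add: Dcob_prod_additive_card_eq constrained_bijections_permutes)
  show "(\<Sum>\<sigma>\<in>{\<sigma>. \<sigma> permutes {1..n}}. \<Prod>l=1..n. of_real (g l $ i (\<sigma> l)) :: 'a)
          = of_nat (\<Prod>k\<in>UNIV. fact (card {l\<in>{1..n}. i l = k}))
            * (\<Sum>\<kappa>\<in>{\<kappa> \<in> {1..n} \<rightarrow>\<^sub>E (UNIV :: 'n set).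
                     \<forall>k. card {l\<in>{1..n}. \<kappa> l = k} = card {l\<in>{1..n}. i l = k}}.
                 \<Prod>l=1..n. of_real (g l $ \<kappa> l))"
    by (rule sum_permutes_collect_patterns) simp
qed

end
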